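(* In the setting of the context, suppose $G_2$ is a $p$-group and $S$ is a simple $KH_1$-module with $H_1^2=H_1$. Then $G_2'=H_2$ and $G_1''=G_1$.
   Context: $K$ is algebraically closed of characteristic zero; $G_2$ is a finite group with normal subgroups $G_1$, $H_2$, and $H_1=G_1\cap H_2$, all normal in $G_2$, with $G_2=G_1H_2$ and $[G_2:G_1]=[H_2:H_1]=p$. For a normal subgroup $N$ of a group $X$, an $N$-module $W$ and $x\in X$, ${}^xW$ is $W$ with action $n\cdot w=(x^{-1}nx)w$, and $I_X(W)=\{x\in X:{}^xW\cong W\}$. For a simple $KH_1$-module $S$: $H_1^2=I_{G_2}(S)$. When $H_1^2=H_1$, the modules $T=\operatorname{Ind}_{H_1}^{H_2}S$ (the $KH_2$-module $KH_2S$) and $T'=\operatorname{Ind}_{H_1}^{G_1}S$ (the $KG_1$-module $KG_1S$) are simple, and the decomposition groups are $G_2'=I_{G_2}(T)$ and $G_1''=I_{G_2}(T')$. *)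

theory Defs
  imports "Jordan_Normal_Form.Matrix" "HOL-Algebra.Coset"
    "HOL-Computational_Algebra.Polynomial"
begin

text \<open>Finite-dimensional matrix representations of a subgroup N of a group G over a
field of scalars 'k.  A KN-module of dimension n is given by a homomorphism
N -> GL_n('k), represented by n x n matrices.\<close>

definition is_rep :: "('g,'b) monoid_scheme \<Rightarrow> 'g set \<Rightarrow> nat \<Rightarrow> ('g \<Rightarrow> 'k::field mat) \<Rightarrow> bool" where
  "is_rep G N n \<rho> \<longleftrightarrow>
     (\<forall>g\<in>N. \<rho> g \<in> carrier_mat n n) \<and> \<rho> \<one>\<^bsub>G\<^esub> = 1\<^sub>m n \<and>
     (\<forall>g\<in>N. \<forall>h\<in>N. \<rho> (g \<otimes>\<^bsub>G\<^esub> h) = \<rho> g * \<rho> h)"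

definition invariant_subspace :: "'g set \<Rightarrow> nat \<Rightarrow> ('g \<Rightarrow> 'k::field mat) \<Rightarrow> 'k vec set \<Rightarrow> bool" where
  "invariant_subspace N n \<rho> W \<longleftrightarrow>
     W \<subseteq> carrier_vec n \<and> 0\<^sub>v n \<in> W \<and>
     (\<forall>v\<in>W. \<forall>w\<in>W. v + w \<in> W) \<and> (\<forall>c. \<forall>v\<in>W. c \<cdot>\<^sub>v v \<in> W) \<and>
     (\<forall>g\<in>N. \<forall>v\<in>W. \<rho> g *\<^sub>v v \<in> W)"

definition simple_rep :: "('g,'b) monoid_scheme \<Rightarrow> 'g set \<Rightarrow> nat \<Rightarrow> ('g \<Rightarrow> 'k::field mat) \<Rightarrow> bool" where
  "simple_rep G N n \<rho> \<longleftrightarrow> is_rep G N n \<rho> \<and> n > 0 \<and>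
     (\<forall>W. invariant_subspace N n \<rho> W \<longrightarrow> W = {0\<^sub>v n} \<or> W = carrier_vec n)"

definition rep_iso :: "'g set \<Rightarrow> nat \<Rightarrow> ('g \<Rightarrow> 'k::field mat) \<Rightarrow> ('g \<Rightarrow> 'k mat) \<Rightarrow> bool" where
  "rep_iso N n \<rho> \<sigma> \<longleftrightarrow>
     (\<exists>P \<in> carrier_mat n n. invertible_mat P \<and> (\<forall>g\<in>N. P * \<rho> g = \<sigma> g * P))"

definition conj_rep :: "('g,'b) monoid_scheme \<Rightarrow> 'g \<Rightarrow> ('g \<Rightarrow> 'k mat) \<Rightarrow> ('g \<Rightarrow> 'k mat)" where
  "conj_rep G x \<rho> = (\<lambda>h. \<rho> (inv\<^bsub>G\<^esub> x \<otimes>\<^bsub>G\<^esub> h \<otimes>\<^bsub>G\<^esub> x))"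

definition inertia :: "('g,'b) monoid_scheme \<Rightarrow> 'g set \<Rightarrow> nat \<Rightarrow> ('g \<Rightarrow> 'k::field mat) \<Rightarrow> 'g set" where
  "inertia G N n \<rho> = {x \<in> carrier G. rep_iso N n (conj_rep G x \<rho>) \<rho>}"

definition left_transversal :: "('g,'b) monoid_scheme \<Rightarrow> 'g set \<Rightarrow> 'g set \<Rightarrow> 'g list \<Rightarrow> bool" where
  "left_transversal G K H ts \<longleftrightarrow> set ts \<subseteq> K \<and>
     (\<forall>k\<in>K. \<exists>!i. i < length ts \<and> inv\<^bsub>G\<^esub> (ts ! i) \<otimes>\<^bsub>G\<^esub> k \<in> H)"

definition chosen_transversal :: "('g,'b) monoid_scheme \<Rightarrow> 'g set \<Rightarrow> 'g set \<Rightarrow> 'g list" where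
  "chosen_transversal G K H = (SOME ts. left_transversal G K H ts)"

text \<open>Induced representation Ind_H^K, in the standard block-matrix form:
block (i,j) of Ind(g) is rho(t_i^{-1} g t_j) if this lies in H and 0 otherwise.\<close>
definition ind_dim :: "('g,'b) monoid_scheme \<Rightarrow> 'g set \<Rightarrow> 'g set \<Rightarrow> nat \<Rightarrow> nat" where
  "ind_dim G K H n = length (chosen_transversal G K H) * n"

definition ind_rep :: "('g,'b) monoid_scheme \<Rightarrow> 'g set \<Rightarrow> 'g set \<Rightarrow> nat \<Rightarrow> ('g \<Rightarrow> 'k::field mat) \<Rightarrow> ('g \<Rightarrow> 'k mat)" where
  "ind_rep G K H n \<rho> = (\<lambda>g. let ts = chosen_transversal G K H; d = length ts * n in
     mat d d (\<lambda>(r, c). let x = inv\<^bsub>G\<^esub> (ts ! (r div n)) \<otimes>\<^bsub>G\<^esub> g \<otimes>\<^bsub>G\<^esub> (ts ! (c div n))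
                     in if x \<in> H then \<rho> x $$ (r mod n, c mod n) else 0))"

end

theory Submission
  imports Defs "Jordan_Normal_Form.Determinant"
begin

text \<open>Let \<open>H \<subseteq> K\<close> be subgroups of \<open>G\<close>, \<open>H\<close> normal in \<open>G\<close>, and let \<open>S\<close> be a simple
representation of \<open>H\<close> with inertia group \<open>H\<close>. Every element of \<open>K\<close> stabilises every
representation of \<open>K\<close>, in particular \<open>Ind_H^K S\<close>. Conversely, restricted to \<open>H\<close> the induced
representation is block diagonal with the conjugates \<open>S(t_i\<^sup>-\<^sup>1 _ t_i)\<close> as blocks, \<open>t_i\<close>
running through a transversal of \<open>H\<close> in \<open>K\<close>. If \<open>x \<in> G\<close> stabilises \<open>Ind S\<close>, then for a
suitable \<open>k\<close> the block \<open>(k, 0)\<close> of an intertwiner is a nonzero \<open>H\<close>-map from the conjugate of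
\<open>S\<close> by \<open>z = t_k\<^sup>-\<^sup>1 x t_0\<close> to \<open>S\<close>; by Schur's lemma it is invertible, so
\<open>z \<in> I_G(S) = H \<subseteq> K\<close> and \<open>x \<in> K\<close>. The theorem is the cases \<open>K = H\<^sub>2\<close> and
\<open>K = G\<^sub>1\<close>.\<close>

lemma equiv_ex_representative_list:
  assumes E: "equiv A E" and "B \<subseteq> A" and "finite B"
  shows "\<exists>ts. set ts \<subseteq> B \<and> (\<forall>b\<in>B. \<exists>!i. i < length ts \<and> (ts ! i, b) \<in> E)"
proof -
  define rep where "rep C = (SOME t. t \<in> B \<and> t \<in> C)" for C
  define Cs where "Cs = (\<lambda>b. E `` {b}) ` B"
  have rep: "rep C \<in> B \<and> E `` {rep C} = C" if C: "C \<in> Cs" for C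
  proof -
    obtain b where b: "b \<in> B" "C = E `` {b}" using C Cs_def by blast
    then have "b \<in> C" using equiv_class_self[OF E] \<open>B \<subseteq> A\<close> by blast
    then have "rep C \<in> B \<and> rep C \<in> C"
      using someI[of "\<lambda>t. t \<in> B \<and> t \<in> C" b] b(1) unfolding rep_def by blast
    then show ?thesis using b E by (metis Image_singleton_iff equiv_class_eq)
  qed
  obtain ts where ts: "distinct ts" "set ts = rep ` Cs"
    using finite_distinct_list[of "rep ` Cs"] \<open>finite B\<close> Cs_def by blast
  have ts_rep: "ts ! i \<in> B \<and> rep (E `` {ts ! i}) = ts ! i" if "i < length ts" for i
    using nth_mem[OF that] ts(2) rep by auto
  have "set ts \<subseteq> B" using ts_rep by (auto simp: in_set_conv_nth)
  moreover have "\<exists>!i. i < length ts \<and> (ts ! i, b) \<in> E" if b: "b \<in> B" for b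
  proof -
    have in_A: "ts ! i \<in> A" if "i < length ts" for i using ts_rep[OF that] \<open>B \<subseteq> A\<close> by blast
    have related_iff: "(ts ! i, b) \<in> E \<longleftrightarrow> E `` {ts ! i} = E `` {b}" if "i < length ts" for i
      using eq_equiv_class_iff[OF E in_A[OF that]] b \<open>B \<subseteq> A\<close> by blast
    obtain i where i: "i < length ts" "ts ! i = rep (E `` {b})"
      using b ts(2) Cs_def by (metis imageI in_set_conv_nth)
    have "(ts ! i, b) \<in> E"
      using related_iff[OF i(1)] rep[of "E `` {b}"] b Cs_def i(2) by auto
    moreover have "j = i" if "j < length ts" "(ts ! j, b) \<in> E" for j
      using related_iff that i \<open>(ts ! i, b) \<in> E\<close> ts_rep ts(1) nth_eq_iff_index_eq by metis
    ultimately show ?thesis using i(1) by blast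
  qed
  ultimately show ?thesis by blast
qed

context group
begin

lemma mult_inv_cancel_left: "x \<in> carrier G \<Longrightarrow> y \<in> carrier G \<Longrightarrow> x \<otimes> (inv x \<otimes> y) = y"
  by (simp add: m_assoc [symmetric])

lemma inv_mult_cancel_left: "x \<in> carrier G \<Longrightarrow> y \<in> carrier G \<Longrightarrow> inv x \<otimes> (x \<otimes> y) = y"
  by (simp add: m_assoc [symmetric])

lemma subgroup_inv_mem_iff: "subgroup H G \<Longrightarrow> x \<in> carrier G \<Longrightarrow> inv x \<in> H \<longleftrightarrow> x \<in> H"
  by (metis inv_inv subgroup.m_inv_closed)

lemma subgroup_mult_mem_iff:
  assumes H: "subgroup H G" and "a \<in> H" and "b \<in> carrier G"
  shows "a \<otimes> b \<in> H \<longleftrightarrow> b \<in> H"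
proof
  assume "a \<otimes> b \<in> H"
  then have "inv a \<otimes> (a \<otimes> b) \<in> H"
    using H \<open>a \<in> H\<close> by (simp add: subgroup.m_closed subgroup.m_inv_closed)
  then show "b \<in> H"
    using subgroup.mem_carrier[OF H \<open>a \<in> H\<close>] \<open>b \<in> carrier G\<close> by (simp add: inv_mult_cancel_left)
qed (use H \<open>a \<in> H\<close> in \<open>rule subgroup.m_closed\<close>)

lemma ex_left_transversal:
  assumes "subgroup H G" and "K \<subseteq> carrier G" and "finite K"
  shows "\<exists>ts. left_transversal G K H ts"
proof -
  obtain ts where ts: "set ts \<subseteq> K" "\<forall>k\<in>K. \<exists>!i. i < length ts \<and> (ts ! i, k) \<in> r_congruent G H"
    using equiv_ex_representative_list[OF subgroup.equiv_rcong[OF assms(1) is_group] assms(2,3)]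
    by blast
  have "(ts ! i, k) \<in> r_congruent G H \<longleftrightarrow> inv (ts ! i) \<otimes> k \<in> H" if "i < length ts" "k \<in> K" for i k
    using that ts(1) assms(2) nth_mem unfolding r_congruent_def by blast
  then have "\<forall>k\<in>K. \<exists>!i. i < length ts \<and> inv (ts ! i) \<otimes> k \<in> H"
    using ts(2) by (metis (no_types, lifting))
  then show ?thesis using ts(1) unfolding left_transversal_def by blast
qed

end

definition mat_block :: "nat \<Rightarrow> 'a mat \<Rightarrow> nat \<Rightarrow> nat \<Rightarrow> 'a mat" where
  "mat_block n A i j = mat n n (\<lambda>(a, b). A $$ (i * n + a, j * n + b))"

lemma mat_block_carrier [simp]: "mat_block n A i j \<in> carrier_mat n n"
  by (simp add: mat_block_def)

lemma dim_mat_block [simp]: "dim_row (mat_block n A i j) = n" "dim_col (mat_block n A i j) = n"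
  by (simp_all add: mat_block_def)

lemma index_mat_block [simp]:
  "a < n \<Longrightarrow> b < n \<Longrightarrow> mat_block n A i j $$ (a, b) = A $$ (i * n + a, j * n + b)"
  by (simp add: mat_block_def)

lemma block_index_less: "i < m \<Longrightarrow> a < n \<Longrightarrow> i * n + a < m * (n :: nat)"
proof -
  assume "i < m" "a < n"
  then have "i * n + a < (i + 1) * n" by simp
  also have "\<dots> \<le> m * n" using \<open>i < m\<close> by (intro mult_right_mono) auto
  finally show ?thesis .
qed

lemma block_index_eq_iff:
  assumes "a < n" and "b < n"
  shows "i * n + a = j * n + b \<longleftrightarrow> i = j \<and> a = (b :: nat)"
proof
  assume eq: "i * n + a = j * n + b"
  have "i = (i * n + a) div n" "j = (j * n + b) div n" using assms by simp_all
  moreover have "a = (i * n + a) mod n" "b = (j * n + b) mod n" using assms by simp_all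
  ultimately show "i = j \<and> a = b" using eq by metis
qed simp

lemma mat_eq_by_blocks:
  assumes A: "A \<in> carrier_mat (m * n) (m * n)" and B: "B \<in> carrier_mat (m * n) (m * n)"
    and blocks: "\<And>i j. i < m \<Longrightarrow> j < m \<Longrightarrow> mat_block n A i j = mat_block n B i j"
  shows "A = B"
proof (rule eq_matI)
  fix r c assume "r < dim_row B" "c < dim_col B"
  then have r: "r < m * n" and c: "c < m * n" using B by auto
  then have "0 < n" by (cases n) auto
  have "A $$ (r, c) = mat_block n A (r div n) (c div n) $$ (r mod n, c mod n)"
    using \<open>0 < n\<close> by simp
  also have "\<dots> = mat_block n B (r div n) (c div n) $$ (r mod n, c mod n)"
    using blocks r c by (simp add: less_mult_imp_div_less)
  also have "\<dots> = B $$ (r, c)" using \<open>0 < n\<close> by simp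
  finally show "A $$ (r, c) = B $$ (r, c)" .
qed (use A B in auto)

lemma sum_concentrated_on_block:
  fixes f :: "nat \<Rightarrow> 'a :: comm_monoid_add"
  assumes "j < m" and zero: "\<And>s. s < m * n \<Longrightarrow> s div n \<noteq> j \<Longrightarrow> f s = 0"
  shows "(\<Sum>s = 0..<m * n. f s) = (\<Sum>b = 0..<n. f (j * n + b))"
proof -
  have "(\<Sum>b = 0..<n. f (j * n + b)) = (\<Sum>s = j * n..<j * n + n. f s)"
    using sum.shift_bounds_nat_ivl[of f 0 "j * n" n] by (simp add: ac_simps)
  also have "\<dots> = (\<Sum>s = 0..<m * n. f s)"
  proof (rule sum.mono_neutral_left)
    have "j * n + n \<le> m * n" using mult_le_mono1[of "Suc j" m n] \<open>j < m\<close> by simp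
    then show "{j * n..<j * n + n} \<subseteq> {0..<m * n}" by auto
    show "\<forall>s\<in>{0..<m * n} - {j * n..<j * n + n}. f s = 0"
    proof
      fix s assume s: "s \<in> {0..<m * n} - {j * n..<j * n + n}"
      then have "0 < n" by (cases n) auto
      have "s div n \<noteq> j"
      proof
        assume "s div n = j"
        then have "s = j * n + s mod n" using div_mult_mod_eq[of s n] by simp
        moreover have "s mod n < n" using \<open>0 < n\<close> by simp
        ultimately show False using s by auto
      qed
      then show "f s = 0" using zero s by simp
    qed
  qed simp
  finally show ?thesis by simp
qed

lemma mat_block_mult_single:
  assumes A: "A \<in> carrier_mat (m * n) (m * n)" and B: "B \<in> carrier_mat (m * n) (m * n)"
    and "i < m" "k < m" "j < m"
    and zero: "\<And>l. l < m \<Longrightarrow> l \<noteq> j \<Longrightarrow> mat_block n A i l = 0\<^sub>m n n \<or> mat_block n B l k = 0\<^sub>m n n"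
  shows "mat_block n (A * B) i k = mat_block n A i j * mat_block n B j k"
proof (rule eq_matI)
  fix a c assume "a < dim_row (mat_block n A i j * mat_block n B j k)"
    and "c < dim_col (mat_block n A i j * mat_block n B j k)"
  then have a: "a < n" and c: "c < n" by auto
  have rows: "i * n + a < m * n" "k * n + c < m * n"
    using block_index_less a c \<open>i < m\<close> \<open>k < m\<close> by auto
  have "mat_block n (A * B) i k $$ (a, c) = (\<Sum>s = 0..<m * n. A $$ (i * n + a, s) * B $$ (s, k * n + c))"
    using A B a c rows by (simp add: scalar_prod_def)
  also have "\<dots> = (\<Sum>b = 0..<n. A $$ (i * n + a, j * n + b) * B $$ (j * n + b, k * n + c))"
  proof (rule sum_concentrated_on_block[OF \<open>j < m\<close>])
    fix s assume s: "s < m * n" "s div n \<noteq> j"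
    then have "0 < n" by (cases n) auto
    have "s div n < m" using s(1) by (simp add: less_mult_imp_div_less)
    with zero s(2) consider "mat_block n A i (s div n) = 0\<^sub>m n n" | "mat_block n B (s div n) k = 0\<^sub>m n n"
      by blast
    then show "A $$ (i * n + a, s) * B $$ (s, k * n + c) = 0"
    proof cases
      case 1
      then have "mat_block n A i (s div n) $$ (a, s mod n) = 0" using a \<open>0 < n\<close> by simp
      then show ?thesis using a \<open>0 < n\<close> by simp
    next
      case 2
      then have "mat_block n B (s div n) k $$ (s mod n, c) = 0" using c \<open>0 < n\<close> by simp
      then show ?thesis using c \<open>0 < n\<close> by simp
    qed
  qed
  also have "\<dots> = (\<Sum>b = 0..<n. mat_block n A i j $$ (a, b) * mat_block n B j k $$ (b, c))"
    using a c by (intro sum.cong) auto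
  also have "\<dots> = (mat_block n A i j * mat_block n B j k) $$ (a, c)"
    using a c by (simp add: scalar_prod_def)
  finally show "mat_block n (A * B) i k $$ (a, c) = (mat_block n A i j * mat_block n B j k) $$ (a, c)" .
qed auto

lemma mat_block_one_mat:
  "i < m \<Longrightarrow> j < m \<Longrightarrow> mat_block n (1\<^sub>m (m * n)) i j = (if i = j then 1\<^sub>m n else 0\<^sub>m n n)"
  by (rule eq_matI) (auto simp: block_index_less block_index_eq_iff)

lemma invertible_mat_col_nonzero:
  fixes P :: "'a :: semiring_1 mat"
  assumes "invertible_mat P" and P: "P \<in> carrier_mat d d" and "j < d"
  shows "\<exists>i<d. P $$ (i, j) \<noteq> 0"
proof (rule ccontr)
  assume "\<not> (\<exists>i<d. P $$ (i, j) \<noteq> 0)"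
  then have col_zero: "P $$ (i, j) = 0" if "i < d" for i using that by blast
  obtain B where BP: "B * P = 1\<^sub>m (dim_row B)" and PB: "P * B = 1\<^sub>m (dim_row P)"
    using assms(1) unfolding invertible_mat_def inverts_mat_def by blast
  then have B: "B \<in> carrier_mat d d"
    using P by (metis carrier_matD carrier_matI index_mult_mat(2,3) index_one_mat(2,3))
  have "1 = (B * P) $$ (j, j)" using BP B \<open>j < d\<close> by simp
  also have "\<dots> = (\<Sum>s = 0..<d. B $$ (j, s) * P $$ (s, j))"
    using B P \<open>j < d\<close> by (simp add: scalar_prod_def)
  also have "\<dots> = 0" using col_zero by simp
  finally show False by simp
qed

lemma invertible_mat_block_nonzero:
  assumes "invertible_mat P" and P: "P \<in> carrier_mat (m * n) (m * n)" and "j < m" and "0 < n"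
  shows "\<exists>k<m. mat_block n P k j \<noteq> 0\<^sub>m n n"
proof -
  have "j * n < m * n" using \<open>j < m\<close> \<open>0 < n\<close> by simp
  then obtain r where r: "r < m * n" "P $$ (r, j * n) \<noteq> 0"
    using invertible_mat_col_nonzero[OF assms(1) P] by blast
  then have "mat_block n P (r div n) j $$ (r mod n, 0) \<noteq> 0" using \<open>0 < n\<close> by simp
  then show ?thesis
    using r(1) \<open>0 < n\<close> by (metis index_zero_mat(1) less_mult_imp_div_less mod_less_divisor)
qed

lemma invertible_mat_if_det_nonzero:
  fixes Q :: "'a :: field mat"
  assumes Q: "Q \<in> carrier_mat n n" and "det Q \<noteq> 0"
  shows "invertible_mat Q"
proof -
  have "Q \<in> Units (ring_mat TYPE('a) n ())" by (rule det_non_zero_imp_unit[OF assms])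
  then obtain B where "B \<in> carrier_mat n n" "B * Q = 1\<^sub>m n" "Q * B = 1\<^sub>m n"
    unfolding Units_def ring_mat_def by auto
  then show ?thesis unfolding invertible_mat_def inverts_mat_def using Q by auto
qed

lemma schur_intertwiner_invertible:
  fixes Q :: "'k :: field mat"
  assumes \<sigma>: "simple_rep G H n \<sigma>" and \<rho>: "\<And>h. h \<in> H \<Longrightarrow> \<rho> h \<in> carrier_mat n n"
    and Q: "Q \<in> carrier_mat n n" "Q \<noteq> 0\<^sub>m n n"
    and intertwines: "\<And>h. h \<in> H \<Longrightarrow> Q * \<sigma> h = \<rho> h * Q"
  shows "invertible_mat Q"
proof (rule invertible_mat_if_det_nonzero[OF Q(1)], rule notI)
  assume "det Q = 0"
  then obtain v where v: "v \<in> carrier_vec n" "v \<noteq> 0\<^sub>v n" "Q *\<^sub>v v = 0\<^sub>v n"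
    using det_0_iff_vec_prod_zero_field[OF Q(1)] by blast
  have \<sigma>_carrier: "\<sigma> h \<in> carrier_mat n n" if "h \<in> H" for h
    using \<sigma> that unfolding simple_rep_def is_rep_def by blast
  have simple: "W = {0\<^sub>v n} \<or> W = carrier_vec n" if "invariant_subspace H n \<sigma> W" for W
    using \<sigma> that unfolding simple_rep_def by blast
  have mult_zero: "A *\<^sub>v 0\<^sub>v n = 0\<^sub>v n" if "A \<in> carrier_mat n n" for A :: "'k mat"
    using that by (intro eq_vecI) (auto simp: scalar_prod_def)
  define W where "W = {u \<in> carrier_vec n. Q *\<^sub>v u = 0\<^sub>v n}"
  have "invariant_subspace H n \<sigma> W"
    unfolding invariant_subspace_def
  proof (intro conjI ballI allI)
    show "W \<subseteq> carrier_vec n" "0\<^sub>v n \<in> W" unfolding W_def using mult_zero[OF Q(1)] by auto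
    show "u + w \<in> W" if "u \<in> W" "w \<in> W" for u w
      using that mult_add_distrib_mat_vec[OF Q(1)] unfolding W_def by simp
    show "c \<cdot>\<^sub>v u \<in> W" if "u \<in> W" for c u
    proof -
      have "c \<cdot>\<^sub>v 0\<^sub>v n = (0\<^sub>v n :: 'k vec)" by (intro eq_vecI) auto
      then show ?thesis using that mult_mat_vec[OF Q(1)] unfolding W_def by simp
    qed
    show "\<sigma> h *\<^sub>v u \<in> W" if h: "h \<in> H" and u: "u \<in> W" for h u
    proof -
      have u_carrier: "u \<in> carrier_vec n" and "Q *\<^sub>v u = 0\<^sub>v n" using u unfolding W_def by auto
      have "Q *\<^sub>v (\<sigma> h *\<^sub>v u) = (Q * \<sigma> h) *\<^sub>v u"
        using Q(1) \<sigma>_carrier[OF h] u_carrier by simp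
      also have "\<dots> = \<rho> h *\<^sub>v (Q *\<^sub>v u)"
        using intertwines[OF h] Q(1) \<rho>[OF h] u_carrier by simp
      also have "\<dots> = 0\<^sub>v n" using \<open>Q *\<^sub>v u = 0\<^sub>v n\<close> mult_zero[OF \<rho>[OF h]] by simp
      finally show ?thesis unfolding W_def using \<sigma>_carrier[OF h] u_carrier by simp
    qed
  qed
  moreover have "W \<noteq> {0\<^sub>v n}" using v unfolding W_def by blast
  ultimately have "W = carrier_vec n" using simple by blast
  have "Q = 0\<^sub>m n n"
  proof (rule eq_matI)
    fix i j assume ij: "i < dim_row (0\<^sub>m n n :: 'k mat)" "j < dim_col (0\<^sub>m n n :: 'k mat)"
    then have "unit_vec n j \<in> W" using \<open>W = carrier_vec n\<close> by simp
    then have "Q *\<^sub>v unit_vec n j = 0\<^sub>v n" unfolding W_def by blast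
    then have "(Q *\<^sub>v unit_vec n j) $ i = 0" using ij by simp
    then show "Q $$ (i, j) = 0\<^sub>m n n $$ (i, j)" using ij Q(1) by auto
  qed (use Q(1) in auto)
  with Q(2) show False by simp
qed

context group
begin

lemma simple_rep_conj_rep:
  assumes H: "H \<lhd> G" and z: "z \<in> carrier G" and S: "simple_rep G H n S"
  shows "simple_rep G H n (conj_rep G z S)"
proof -
  have H_carrier: "H \<subseteq> carrier G" using H normal_imp_subgroup subgroup.subset by blast
  have S_carrier: "S h \<in> carrier_mat n n" if "h \<in> H" for h
    using S that unfolding simple_rep_def is_rep_def by auto
  have S_mult: "S (h \<otimes> h') = S h * S h'" if "h \<in> H" "h' \<in> H" for h h'
    using S that unfolding simple_rep_def is_rep_def by auto
  have conj_in_H: "inv z \<otimes> h \<otimes> z \<in> H" if "h \<in> H" for h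
    using normal.inv_op_closed1[OF H z that] .
  have "is_rep G H n (conj_rep G z S)"
    unfolding is_rep_def conj_rep_def
  proof (intro conjI ballI)
    fix g h assume g: "g \<in> H" and h: "h \<in> H"
    have "inv z \<otimes> (g \<otimes> h) \<otimes> z = (inv z \<otimes> g \<otimes> z) \<otimes> (inv z \<otimes> h \<otimes> z)"
      using g h H_carrier z by (simp add: m_assoc mult_inv_cancel_left subset_iff)
    then show "S (inv z \<otimes> (g \<otimes> h) \<otimes> z) = S (inv z \<otimes> g \<otimes> z) * S (inv z \<otimes> h \<otimes> z)"
      using S_mult[OF conj_in_H[OF g] conj_in_H[OF h]] by simp
  next
    show "S (inv z \<otimes> g \<otimes> z) \<in> carrier_mat n n" if "g \<in> H" for g
      using S_carrier[OF conj_in_H[OF that]] .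
    show "S (inv z \<otimes> \<one> \<otimes> z) = 1\<^sub>m n"
      using S z unfolding simple_rep_def is_rep_def by simp
  qed
  moreover have "invariant_subspace H n S W" if W: "invariant_subspace H n (conj_rep G z S) W" for W
  proof -
    have "S g *\<^sub>v v \<in> W" if g: "g \<in> H" and v: "v \<in> W" for g v
    proof -
      have "z \<otimes> g \<otimes> inv z \<in> H" using normal.inv_op_closed2[OF H z g] .
      then have "conj_rep G z S (z \<otimes> g \<otimes> inv z) *\<^sub>v v \<in> W"
        using W v unfolding invariant_subspace_def by blast
      moreover have "conj_rep G z S (z \<otimes> g \<otimes> inv z) = S g"
        using g H_carrier z unfolding conj_rep_def by (simp add: m_assoc inv_mult_cancel_left subset_iff)
      ultimately show ?thesis by simp
    qed
    then show ?thesis using W unfolding invariant_subspace_def by blast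
  qed
  ultimately show ?thesis using S unfolding simple_rep_def by blast
qed

lemma subgroup_subset_inertia:
  assumes K: "subgroup K G" and T: "is_rep G K d T"
  shows "K \<subseteq> inertia G K d T"
proof
  fix x assume x: "x \<in> K"
  have x_carrier: "x \<in> carrier G" using subgroup.mem_carrier[OF K x] .
  have inv_x: "inv x \<in> K" using subgroup.m_inv_closed[OF K x] .
  have T_mult: "T (g \<otimes> h) = T g * T h" if "g \<in> K" "h \<in> K" for g h
    using T that unfolding is_rep_def by blast
  have T_x: "T x \<in> carrier_mat d d" and T_inv_x: "T (inv x) \<in> carrier_mat d d"
    using T x inv_x unfolding is_rep_def by blast+
  have "T x * T (inv x) = 1\<^sub>m d" "T (inv x) * T x = 1\<^sub>m d"
    using T_mult[OF x inv_x] T_mult[OF inv_x x] T x_carrier unfolding is_rep_def by auto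
  then have "invertible_mat (T x)"
    unfolding invertible_mat_def inverts_mat_def using T_x T_inv_x by (auto intro!: exI[of _ "T (inv x)"])
  moreover have "T x * conj_rep G x T g = T g * T x" if g: "g \<in> K" for g
  proof -
    have "x \<otimes> (inv x \<otimes> g \<otimes> x) = g \<otimes> x"
      using x_carrier subgroup.mem_carrier[OF K g] by (simp add: m_assoc mult_inv_cancel_left)
    moreover have "inv x \<otimes> g \<otimes> x \<in> K"
      using K inv_x g x by (simp add: subgroup.m_closed)
    ultimately show ?thesis using T_mult x g unfolding conj_rep_def by metis
  qed
  ultimately show "x \<in> inertia G K d T"
    unfolding inertia_def rep_iso_def using x_carrier T_x by blast
qed

end

locale induced_rep = group G for G :: "('g, 'b) monoid_scheme" (structure) +
  fixes K H :: "'g set" and n :: nat and S :: "'g \<Rightarrow> 'k :: field mat"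
  assumes subgroup_K: "subgroup K G" and normal_H: "H \<lhd> G" and H_subset_K: "H \<subseteq> K"
    and finite_K: "finite K" and rep_S: "is_rep G H n S"
begin

abbreviation ts where "ts \<equiv> chosen_transversal G K H"
abbreviation m where "m \<equiv> length ts"
abbreviation T where "T \<equiv> ind_rep G K H n S"

lemma subgroup_H: "subgroup H G"
  using normal_H normal_imp_subgroup by blast

lemma K_carrier: "K \<subseteq> carrier G"
  using subgroup_K subgroup.subset by blast

lemma H_carrier: "H \<subseteq> carrier G"
  using H_subset_K K_carrier by blast

lemma S_carrier: "h \<in> H \<Longrightarrow> S h \<in> carrier_mat n n"
  and S_one: "S \<one> = 1\<^sub>m n"
  and S_mult: "g \<in> H \<Longrightarrow> h \<in> H \<Longrightarrow> S (g \<otimes> h) = S g * S h"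
  using rep_S unfolding is_rep_def by auto

lemma left_transversal_ts: "left_transversal G K H ts"
  unfolding chosen_transversal_def
  by (rule someI_ex) (rule ex_left_transversal[OF subgroup_H K_carrier finite_K])

lemma ts_in_K: "i < m \<Longrightarrow> ts ! i \<in> K"
  using left_transversal_ts unfolding left_transversal_def by auto

lemma ts_carrier: "i < m \<Longrightarrow> ts ! i \<in> carrier G"
  using ts_in_K K_carrier by blast

lemma transversal_ex1: "k \<in> K \<Longrightarrow> \<exists>!i. i < m \<and> inv (ts ! i) \<otimes> k \<in> H"
  using left_transversal_ts unfolding left_transversal_def by blast

lemma length_ts_pos: "0 < m"
  using transversal_ex1[OF subgroup.one_closed[OF subgroup_K]] by auto

lemma ind_rep_carrier: "T g \<in> carrier_mat (m * n) (m * n)"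
  unfolding ind_rep_def by (simp add: Let_def)

lemma mat_block_ind_rep:
  assumes "i < m" and "j < m"
  shows "mat_block n (T g) i j = (if inv (ts ! i) \<otimes> g \<otimes> ts ! j \<in> H
    then S (inv (ts ! i) \<otimes> g \<otimes> ts ! j) else 0\<^sub>m n n)"
proof (rule eq_matI)
  fix a b assume "a < dim_row (if inv (ts ! i) \<otimes> g \<otimes> ts ! j \<in> H
    then S (inv (ts ! i) \<otimes> g \<otimes> ts ! j) else 0\<^sub>m n n)"
    and "b < dim_col (if inv (ts ! i) \<otimes> g \<otimes> ts ! j \<in> H
    then S (inv (ts ! i) \<otimes> g \<otimes> ts ! j) else 0\<^sub>m n n)"
  then have "a < n" "b < n" using S_carrier by (auto split: if_splits)
  then show "mat_block n (T g) i j $$ (a, b) = (if inv (ts ! i) \<otimes> g \<otimes> ts ! j \<in> H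
    then S (inv (ts ! i) \<otimes> g \<otimes> ts ! j) else 0\<^sub>m n n) $$ (a, b)"
    using assms unfolding ind_rep_def by (simp add: Let_def block_index_less)
qed (use S_carrier in auto)

lemma ts_inv_mult_mem_iff: "i < m \<Longrightarrow> j < m \<Longrightarrow> inv (ts ! i) \<otimes> ts ! j \<in> H \<longleftrightarrow> i = j"
  using transversal_ex1[OF ts_in_K, of j] ts_carrier subgroup.one_closed[OF subgroup_H] by auto

lemma mat_block_ind_rep_of_H:
  assumes y: "y \<in> H" and i: "i < m" and j: "j < m"
  shows "mat_block n (T y) i j = (if i = j then conj_rep G (ts ! i) S y else 0\<^sub>m n n)"
proof -
  have y_carrier: "y \<in> carrier G" using y H_carrier by blast
  have conj: "inv (ts ! i) \<otimes> y \<otimes> ts ! i \<in> H"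
    using normal.inv_op_closed1[OF normal_H ts_carrier[OF i] y] .
  have "inv (ts ! i) \<otimes> y \<otimes> ts ! j = (inv (ts ! i) \<otimes> y \<otimes> ts ! i) \<otimes> (inv (ts ! i) \<otimes> ts ! j)"
    using ts_carrier[OF i] ts_carrier[OF j] y_carrier by (simp add: m_assoc mult_inv_cancel_left)
  then have "inv (ts ! i) \<otimes> y \<otimes> ts ! j \<in> H \<longleftrightarrow> i = j"
    using subgroup_mult_mem_iff[OF subgroup_H conj] ts_inv_mult_mem_iff[OF i j] ts_carrier[OF i]
      ts_carrier[OF j] by simp
  then show ?thesis using mat_block_ind_rep[OF i j] unfolding conj_rep_def by auto
qed

lemma ind_rep_one: "T \<one> = 1\<^sub>m (m * n)"
proof (rule mat_eq_by_blocks[OF ind_rep_carrier one_carrier_mat])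
  fix i j assume i: "i < m" and j: "j < m"
  have one: "conj_rep G (ts ! l) S \<one> = 1\<^sub>m n" if "l < m" for l
    using S_one ts_carrier[OF that] unfolding conj_rep_def by simp
  show "mat_block n (T \<one>) i j = mat_block n (1\<^sub>m (m * n)) i j"
    using mat_block_ind_rep_of_H[OF subgroup.one_closed[OF subgroup_H] i j] i j
    by (simp add: one mat_block_one_mat[OF i j])
qed

lemma ind_rep_row_support:
  assumes g: "g \<in> K" and i: "i < m"
  obtains j where "j < m" and "inv (ts ! i) \<otimes> g \<otimes> ts ! j \<in> H"
    and "\<And>l. l < m \<Longrightarrow> l \<noteq> j \<Longrightarrow> mat_block n (T g) i l = 0\<^sub>m n n"
proof -
  have g_carrier: "g \<in> carrier G" using g K_carrier by blast
  have "inv g \<otimes> ts ! i \<in> K"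
    using subgroup_K g ts_in_K[OF i] by (simp add: subgroup.m_closed subgroup.m_inv_closed)
  then obtain j where j: "j < m" "inv (ts ! j) \<otimes> (inv g \<otimes> ts ! i) \<in> H"
    and unique: "\<And>l. l < m \<Longrightarrow> inv (ts ! l) \<otimes> (inv g \<otimes> ts ! i) \<in> H \<Longrightarrow> l = j"
    using transversal_ex1 by metis
  have mem_iff: "inv (ts ! i) \<otimes> g \<otimes> ts ! l \<in> H \<longleftrightarrow> inv (ts ! l) \<otimes> (inv g \<otimes> ts ! i) \<in> H"
    if "l < m" for l
    using subgroup_inv_mem_iff[OF subgroup_H, of "inv (ts ! i) \<otimes> g \<otimes> ts ! l"]
      ts_carrier[OF i] ts_carrier[OF that] g_carrier by (simp add: inv_mult_group m_assoc)
  show thesis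
  proof (rule that[OF j(1)])
    show "inv (ts ! i) \<otimes> g \<otimes> ts ! j \<in> H" using mem_iff[OF j(1)] j(2) by blast
    fix l assume l: "l < m" "l \<noteq> j"
    then have "inv (ts ! i) \<otimes> g \<otimes> ts ! l \<notin> H" using mem_iff[OF l(1)] unique by blast
    then show "mat_block n (T g) i l = 0\<^sub>m n n" using mat_block_ind_rep[OF i l(1)] by simp
  qed
qed

lemma ind_rep_mult:
  assumes g: "g \<in> K" and h: "h \<in> K"
  shows "T (g \<otimes> h) = T g * T h"
proof (rule mat_eq_by_blocks[OF ind_rep_carrier mult_carrier_mat[OF ind_rep_carrier ind_rep_carrier]])
  fix i k assume i: "i < m" and k: "k < m"
  obtain j where j: "j < m" and a_H: "inv (ts ! i) \<otimes> g \<otimes> ts ! j \<in> H"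
    and zero: "\<And>l. l < m \<Longrightarrow> l \<noteq> j \<Longrightarrow> mat_block n (T g) i l = 0\<^sub>m n n"
    using ind_rep_row_support[OF g i] by blast
  define a b where "a = inv (ts ! i) \<otimes> g \<otimes> ts ! j" and "b = inv (ts ! j) \<otimes> h \<otimes> ts ! k"
  have "b \<in> carrier G" "g \<in> carrier G" "h \<in> carrier G"
    unfolding b_def using g h K_carrier ts_carrier[OF j] ts_carrier[OF k] by auto
  have ab: "a \<otimes> b = inv (ts ! i) \<otimes> (g \<otimes> h) \<otimes> ts ! k"
    unfolding a_def b_def using \<open>g \<in> carrier G\<close> \<open>h \<in> carrier G\<close> ts_carrier i j k
    by (simp add: m_assoc mult_inv_cancel_left)
  have "mat_block n (T g * T h) i k = mat_block n (T g) i j * mat_block n (T h) j k"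
    using mat_block_mult_single[OF ind_rep_carrier ind_rep_carrier i k j] zero by blast
  also have "\<dots> = S a * (if b \<in> H then S b else 0\<^sub>m n n)"
    using mat_block_ind_rep i j k a_H unfolding a_def b_def by simp
  also have "\<dots> = (if a \<otimes> b \<in> H then S (a \<otimes> b) else 0\<^sub>m n n)"
    using subgroup_mult_mem_iff[OF subgroup_H a_H[folded a_def] \<open>b \<in> carrier G\<close>]
      S_mult[OF a_H[folded a_def]] S_carrier[OF a_H[folded a_def]] by auto
  also have "\<dots> = mat_block n (T (g \<otimes> h)) i k"
    using mat_block_ind_rep[OF i k] ab by simp
  finally show "mat_block n (T (g \<otimes> h)) i k = mat_block n (T g * T h) i k" by simp
qed

lemma is_rep_ind_rep: "is_rep G K (m * n) T"
  unfolding is_rep_def using ind_rep_carrier ind_rep_one ind_rep_mult by blast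

lemma subset_inertia_ind_rep: "K \<subseteq> inertia G K (ind_dim G K H n) T"
  using subgroup_subset_inertia[OF subgroup_K is_rep_ind_rep] by (simp add: ind_dim_def)

lemma intertwiner_block:
  assumes x: "x \<in> carrier G" and P: "P \<in> carrier_mat (m * n) (m * n)"
    and intertwines: "\<And>g. g \<in> H \<Longrightarrow> P * T (inv x \<otimes> g \<otimes> x) = T g * P"
    and k: "k < m" and h: "h \<in> H"
  shows "mat_block n P k 0 * conj_rep G (inv (ts ! k) \<otimes> x \<otimes> ts ! 0) S h = S h * mat_block n P k 0"
proof -
  define t0 tk where "t0 = ts ! 0" and "tk = ts ! k"
  have t0: "t0 \<in> carrier G" and tk: "tk \<in> carrier G"
    unfolding t0_def tk_def using ts_carrier k length_ts_pos by auto
  have h_carrier: "h \<in> carrier G" using h H_carrier by blast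
  define g where "g = tk \<otimes> h \<otimes> inv tk"
  have g: "g \<in> H" unfolding g_def using normal.inv_op_closed2[OF normal_H tk h] .
  have y: "inv x \<otimes> g \<otimes> x \<in> H" using normal.inv_op_closed1[OF normal_H x g] .
  have "mat_block n P k 0 * conj_rep G (inv tk \<otimes> x \<otimes> t0) S h
      = mat_block n P k 0 * mat_block n (T (inv x \<otimes> g \<otimes> x)) 0 0"
    using mat_block_ind_rep_of_H[OF y length_ts_pos length_ts_pos] x t0 tk h_carrier
    unfolding g_def t0_def conj_rep_def by (simp add: m_assoc inv_mult_group)
  also have "\<dots> = mat_block n (P * T (inv x \<otimes> g \<otimes> x)) k 0"
  proof (rule mat_block_mult_single[OF P ind_rep_carrier k length_ts_pos length_ts_pos, symmetric])
    fix l assume "l < m" "l \<noteq> 0"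
    then show "mat_block n P k l = 0\<^sub>m n n \<or> mat_block n (T (inv x \<otimes> g \<otimes> x)) l 0 = 0\<^sub>m n n"
      using mat_block_ind_rep_of_H[OF y \<open>l < m\<close> length_ts_pos] by simp
  qed
  also have "\<dots> = mat_block n (T g * P) k 0" using intertwines[OF g] by simp
  also have "\<dots> = mat_block n (T g) k k * mat_block n P k 0"
  proof (rule mat_block_mult_single[OF ind_rep_carrier P k length_ts_pos k])
    fix l assume "l < m" "l \<noteq> k"
    then show "mat_block n (T g) k l = 0\<^sub>m n n \<or> mat_block n P l 0 = 0\<^sub>m n n"
      using mat_block_ind_rep_of_H[OF g k \<open>l < m\<close>] by simp
  qed
  also have "\<dots> = S h * mat_block n P k 0"
    using mat_block_ind_rep_of_H[OF g k k] tk h_carrier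
    unfolding g_def tk_def conj_rep_def by (simp add: m_assoc inv_mult_cancel_left)
  finally show ?thesis unfolding t0_def tk_def .
qed

lemma inertia_ind_rep_subset:
  assumes S: "simple_rep G H n S" and inertia_S: "inertia G H n S = H"
  shows "inertia G K (ind_dim G K H n) T \<subseteq> K"
proof
  fix x assume "x \<in> inertia G K (ind_dim G K H n) T"
  then have x: "x \<in> carrier G" and "rep_iso K (m * n) (conj_rep G x T) T"
    unfolding inertia_def ind_dim_def by auto
  then obtain P where P: "P \<in> carrier_mat (m * n) (m * n)" and "invertible_mat P"
    and intertwines: "\<And>g. g \<in> K \<Longrightarrow> P * T (inv x \<otimes> g \<otimes> x) = T g * P"
    unfolding rep_iso_def conj_rep_def by blast
  have intertwines_H: "P * T (inv x \<otimes> g \<otimes> x) = T g * P" if "g \<in> H" for g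
    using intertwines that H_subset_K by blast
  have "0 < n" using S unfolding simple_rep_def by blast
  obtain k where k: "k < m" and "mat_block n P k 0 \<noteq> 0\<^sub>m n n"
    using invertible_mat_block_nonzero[OF \<open>invertible_mat P\<close> P length_ts_pos \<open>0 < n\<close>] by blast
  define z where "z = inv (ts ! k) \<otimes> x \<otimes> ts ! 0"
  have z: "z \<in> carrier G" unfolding z_def using x ts_carrier k length_ts_pos by simp
  have block: "mat_block n P k 0 * conj_rep G z S h = S h * mat_block n P k 0" if "h \<in> H" for h
    unfolding z_def by (rule intertwiner_block[OF x P intertwines_H k that])
  have "invertible_mat (mat_block n P k 0)"
    using schur_intertwiner_invertible[OF simple_rep_conj_rep[OF normal_H z S] S_carrier
      mat_block_carrier \<open>mat_block n P k 0 \<noteq> 0\<^sub>m n n\<close> block] .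
  then have "rep_iso H n (conj_rep G z S) S"
    unfolding rep_iso_def using block mat_block_carrier by blast
  then have "z \<in> inertia G H n S" unfolding inertia_def using z by blast
  then have "z \<in> K" using inertia_S H_subset_K by blast
  then have "ts ! k \<otimes> z \<otimes> inv (ts ! 0) \<in> K"
    using subgroup_K ts_in_K k length_ts_pos by (simp add: subgroup.m_closed subgroup.m_inv_closed)
  moreover have "ts ! k \<otimes> z \<otimes> inv (ts ! 0) = x"
    unfolding z_def using x ts_carrier k length_ts_pos by (simp add: m_assoc mult_inv_cancel_left)
  ultimately show "x \<in> K" by simp
qed

theorem inertia_ind_rep:
  assumes "simple_rep G H n S" and "inertia G H n S = H"
  shows "inertia G K (ind_dim G K H n) T = K"
  using inertia_ind_rep_subset[OF assms] subset_inertia_ind_rep by blast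

end

theorem mainTheorem15:
  fixes G :: "('g, 'b) monoid_scheme" (structure)
    and G1 H1 H2 :: "'g set" and p n :: nat
    and S :: "'g \<Rightarrow> 'k :: {alg_closed_field, field_char_0} mat"
  assumes "group G" and "finite (carrier G)"
    and "prime p" and "\<exists>k. card (carrier G) = p ^ k"
    and "G1 \<lhd> G" and "H2 \<lhd> G" and "H1 = G1 \<inter> H2" and "H1 \<lhd> G"
    and "G1 <#> H2 = carrier G"
    and "card (carrier G) = p * card G1" and "card H2 = p * card H1"
    and "simple_rep G H1 n S"
    and "inertia G H1 n S = H1"
  shows "inertia G H2 (ind_dim G H2 H1 n) (ind_rep G H2 H1 n S) = H2
       \<and> inertia G G1 (ind_dim G G1 H1 n) (ind_rep G G1 H1 n S) = G1"
proof -
  have rep: "is_rep G H1 n S" using assms(12) unfolding simple_rep_def by blast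
  have subgroups: "subgroup H2 G" "subgroup G1 G" using assms(5,6) normal_imp_subgroup by blast+
  then have "finite H2" "finite G1" using assms(2) by (meson finite_subset subgroup.subset)+
  moreover have "H1 \<subseteq> H2" "H1 \<subseteq> G1" using assms(7) by blast+
  ultimately interpret H2: induced_rep G H2 H1 n S + G1: induced_rep G G1 H1 n S
    using assms(1,8) subgroups rep by (auto intro!: induced_rep.intro induced_rep_axioms.intro)
  show ?thesis using H2.inertia_ind_rep[OF assms(12,13)] G1.inertia_ind_rep[OF assms(12,13)] ..
qed

end
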